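(* Let $A\subseteq\mathbb{N}$, let $d,r\in\mathbb{N}$, let $B=\{a/d : a\in A\}\cap\mathbb{N}$ and let $C=\{a\in A : a\equiv 0 \pmod d\}$. If $A$ is $rd$-accessible, then (i) $B$ is $r$-accessible, and (ii) $C$ is $r$-accessible.
   Context: An $r$-coloring of a set $A$ is a function $\chi:A\to\{1,\dots,r\}$. For $D\subseteq\mathbb{N}=\{1,2,3,\dots\}$, a $k$-term $D$-diffsequence is a sequence of integers $x_1,\dots,x_k$ with $x_{i+1}-x_i\in D$ for all $1\le i\le k-1$. A set $D\subseteq\mathbb{N}$ is $r$-accessible if for every $r$-coloring of $\mathbb{N}$ and every $k\ge1$ there is a monochromatic $k$-term $D$-diffsequence in $\mathbb{N}$. *)

theory Defs
  imports Main
begin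

text \<open>Positive naturals N = {1,2,3,...} are represented as the natural numbers n with n >= 1.\<close>

definition r_coloring :: "nat \<Rightarrow> (nat \<Rightarrow> nat) \<Rightarrow> bool" where
  "r_coloring r \<chi> \<longleftrightarrow> (\<forall>n\<ge>1. \<chi> n \<in> {1..r})"

text \<open>A k-term D-diffsequence x_1,...,x_k (indexed here as x 0, ..., x (k-1)),
  lying in N.\<close>
definition diffseq_in_N :: "nat set \<Rightarrow> nat \<Rightarrow> (nat \<Rightarrow> nat) \<Rightarrow> bool" where
  "diffseq_in_N D k x \<longleftrightarrow>
     (\<forall>i<k. x i \<ge> 1) \<and>
     (\<forall>i. i + 1 < k \<longrightarrow> (\<exists>t\<in>D. int (x (i + 1)) - int (x i) = int t))"

definition monochromatic :: "(nat \<Rightarrow> nat) \<Rightarrow> nat \<Rightarrow> (nat \<Rightarrow> nat) \<Rightarrow> bool" where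
  "monochromatic \<chi> k x \<longleftrightarrow> (\<forall>i<k. \<forall>j<k. \<chi> (x i) = \<chi> (x j))"

definition accessible :: "nat \<Rightarrow> nat set \<Rightarrow> bool" where
  "accessible r D \<longleftrightarrow>
     (\<forall>\<chi>. r_coloring r \<chi> \<longrightarrow>
        (\<forall>k\<ge>1. \<exists>x. diffseq_in_N D k x \<and> monochromatic \<chi> k x))"

end

theory Submission
  imports Defs
begin

text \<open>Given an r-colouring \<open>\<chi>\<close>, colour n by the pair (n mod d, \<open>\<chi>\<close> n); this uses r d colours.
  A monochromatic A-diffsequence for the refined colouring stays in one residue class, so all of
  its steps are multiples of d, i.e. lie in C. Dividing such a sequence by d, and pulling \<open>\<chi>\<close>
  back along n \<mapsto> n div d + 1, turns it into a monochromatic B-diffsequence.\<close>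

definition product_coloring :: "nat \<Rightarrow> (nat \<Rightarrow> nat) \<Rightarrow> nat \<Rightarrow> nat" where
  "product_coloring d c n = 1 + n mod d + d * (c n - 1)"

lemma r_coloring_product_coloring:
  assumes "r_coloring r c" and "d \<ge> 1"
  shows "r_coloring (r * d) (product_coloring d c)"
  unfolding r_coloring_def
proof (intro allI impI)
  fix n :: nat
  assume "n \<ge> 1"
  then have c: "1 \<le> c n" "c n \<le> r" using assms(1) by (auto simp: r_coloring_def)
  have "d * (c n - 1) \<le> d * (r - 1)" using c by (intro mult_le_mono2) linarith
  moreover have "n mod d < d" using assms(2) by simp
  moreover have "d + d * (r - 1) = r * d" using c by (cases r) auto
  ultimately have "1 + n mod d + d * (c n - 1) \<le> r * d" by linarith
  then show "product_coloring d c n \<in> {1..r * d}"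
    unfolding product_coloring_def by simp
qed

lemma product_coloring_eqD:
  assumes "product_coloring d c n = product_coloring d c m"
    and "c n \<ge> 1" and "c m \<ge> 1" and "d \<ge> 1"
  shows "n mod d = m mod d \<and> c n = c m"
proof -
  have "(n mod d + d * (c n - 1)) mod d = (m mod d + d * (c m - 1)) mod d"
    using assms(1) by (simp add: product_coloring_def)
  then have residue: "n mod d = m mod d" by simp
  then have "d * (c n - 1) = d * (c m - 1)"
    using assms(1) by (simp add: product_coloring_def)
  then show ?thesis using residue assms(2-4) by simp
qed

lemma diffseq_in_N_multiples:
  assumes "diffseq_in_N A k x" and "\<And>i. i < k \<Longrightarrow> x i mod d = x 0 mod d"
  shows "diffseq_in_N {a \<in> A. a mod d = 0} k x"
  unfolding diffseq_in_N_def
proof (intro conjI allI impI)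
  fix i
  assume "i < k"
  then show "x i \<ge> 1" using assms(1) by (simp add: diffseq_in_N_def)
next
  fix i
  assume i: "i + 1 < k"
  then obtain t where t: "t \<in> A" "int (x (i + 1)) - int (x i) = int t"
    using assms(1) by (auto simp: diffseq_in_N_def)
  have step: "x (i + 1) - x i = t" "x i \<le> x (i + 1)" using t(2) by linarith+
  have "x (i + 1) mod d = x i mod d" using assms(2)[of i] assms(2)[of "i + 1"] i by simp
  then have "d dvd t" using step by (simp add: mod_eq_dvd_iff_nat)
  then have "t mod d = 0" by simp
  then show "\<exists>s\<in>{a \<in> A. a mod d = 0}. int (x (i + 1)) - int (x i) = int s"
    using t by auto
qed

lemma accessible_multiples:
  assumes "accessible (r * d) A" and "d \<ge> 1"
  shows "accessible r {a \<in> A. a mod d = 0}"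
  unfolding accessible_def
proof (intro allI impI)
  fix \<chi> :: "nat \<Rightarrow> nat" and k :: nat
  assume \<chi>: "r_coloring r \<chi>" and k: "k \<ge> 1"
  obtain x where x: "diffseq_in_N A k x" and mono: "monochromatic (product_coloring d \<chi>) k x"
    using assms(1) r_coloring_product_coloring[OF \<chi> assms(2)] k
    unfolding accessible_def by blast
  have same: "x i mod d = x j mod d \<and> \<chi> (x i) = \<chi> (x j)" if "i < k" "j < k" for i j
  proof (rule product_coloring_eqD[OF _ _ _ assms(2)])
    show "product_coloring d \<chi> (x i) = product_coloring d \<chi> (x j)"
      using mono that unfolding monochromatic_def by blast
    show "\<chi> (x i) \<ge> 1" "\<chi> (x j) \<ge> 1"
      using x \<chi> that by (auto simp: diffseq_in_N_def r_coloring_def)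
  qed
  have "diffseq_in_N {a \<in> A. a mod d = 0} k x"
  proof (rule diffseq_in_N_multiples[OF x])
    show "x i mod d = x 0 mod d" if "i < k" for i
      using same[of i 0] that k by simp
  qed
  moreover have "monochromatic \<chi> k x"
    unfolding monochromatic_def using same by blast
  ultimately show "\<exists>x. diffseq_in_N {a \<in> A. a mod d = 0} k x \<and> monochromatic \<chi> k x"
    by blast
qed

lemma diffseq_in_N_div:
  assumes "diffseq_in_N D k x" and "\<forall>t\<in>D. d dvd t"
  shows "diffseq_in_N {b. d * b \<in> D} k (\<lambda>i. x i div d + 1)"
  unfolding diffseq_in_N_def
proof (intro conjI allI impI)
  fix i
  assume "i + 1 < k"
  then obtain t where "t \<in> D" "int (x (i + 1)) - int (x i) = int t"
    using assms(1) unfolding diffseq_in_N_def by blast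
  then have t: "t \<in> D" "x (i + 1) = x i + t" by linarith+
  have "d dvd t" using t(1) assms(2) by blast
  then have "x (i + 1) div d = x i div d + t div d"
    using t(2) by (simp add: div_plus_div_distrib_dvd_right)
  moreover have "d * (t div d) \<in> D" using t(1) \<open>d dvd t\<close> by simp
  ultimately show "\<exists>s\<in>{b. d * b \<in> D}. int (x (i + 1) div d + 1) - int (x i div d + 1) = int s"
    by (intro bexI[of _ "t div d"]) simp_all
qed simp

lemma accessible_div:
  assumes "accessible r D" and "\<forall>t\<in>D. d dvd t"
  shows "accessible r {b. d * b \<in> D}"
  unfolding accessible_def
proof (intro allI impI)
  fix \<chi> :: "nat \<Rightarrow> nat" and k :: nat
  assume \<chi>: "r_coloring r \<chi>" and k: "k \<ge> 1"
  have pullback: "r_coloring r (\<lambda>n. \<chi> (n div d + 1))" using \<chi> by (simp add: r_coloring_def)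
  obtain x where x: "diffseq_in_N D k x"
    and mono: "monochromatic (\<lambda>n. \<chi> (n div d + 1)) k x"
    using assms(1)[unfolded accessible_def, rule_format, OF pullback k] by blast
  have "diffseq_in_N {b. d * b \<in> D} k (\<lambda>i. x i div d + 1)"
    using diffseq_in_N_div[OF x assms(2)] .
  moreover have "monochromatic \<chi> k (\<lambda>i. x i div d + 1)"
    using mono unfolding monochromatic_def by blast
  ultimately show "\<exists>y. diffseq_in_N {b. d * b \<in> D} k y \<and> monochromatic \<chi> k y" by blast
qed

theorem mainTheorem3:
  fixes A :: "nat set" and d r :: nat
  assumes "A \<subseteq> {1..}" and "d \<ge> 1" and "r \<ge> 1"
    and "accessible (r * d) A"
  shows "accessible r {b. b \<ge> 1 \<and> d * b \<in> A} \<and> accessible r {a \<in> A. a mod d = 0}"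
proof
  show multiples: "accessible r {a \<in> A. a mod d = 0}"
    using accessible_multiples[OF assms(4,2)] .
  have "accessible r {b. d * b \<in> {a \<in> A. a mod d = 0}}"
    by (rule accessible_div[OF multiples]) auto
  moreover have "{b. d * b \<in> {a \<in> A. a mod d = 0}} = {b. b \<ge> 1 \<and> d * b \<in> A}"
    using assms(1) by (auto simp: Suc_le_eq)
  ultimately show "accessible r {b. b \<ge> 1 \<and> d * b \<in> A}" by simp
qed

end
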